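(* Let $n\ge2$, $r\ge1$, and let $V_1,\dots,V_r\in\mathrm{Mat}(n,\mathbb{C})$ satisfy $\operatorname{tr}(V_s^*V_m)=\delta_{sm}$. Define $$P_{\mathcal T}=\sum_{s=1}^r\sum_{a,b,c,d=1}^n (V_s)_{ab}(\bar V_s)_{cd}\,E^{(n)}_{ac}\otimes E^{(n)}_{bd}\in\mathrm{Mat}(n^2,\mathbb{C}),$$ $$A_{\mathcal T}=\sum_{s,m=1}^r E^{(r)}_{sm}\otimes\Big(\sum_{i=1}^r V_i\bar V_sV_m^tV_i^*\Big)\in\mathrm{Mat}(rn,\mathbb{C}).$$ Then for all integers $m\ge1$, $$\operatorname{tr}_3\big(((P_{\mathcal T})_1(P_{\mathcal T})_2)^m\big)=\operatorname{tr}\big(A_{\mathcal T}^m\big),$$ where $(P_{\mathcal T})_1=P_{\mathcal T}\otimes I_n$ and $(P_{\mathcal T})_2=I_n\otimes P_{\mathcal T}$.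
   Context: $E^{(p)}_{ab}\in\mathrm{Mat}(p,\mathbb{C})$ is the matrix unit with $(E^{(p)}_{ab})_{ij}=\delta_{ai}\delta_{bj}$; $\bar V$ is the entrywise complex conjugate, $V^t$ the transpose, $V^*$ the conjugate transpose; $\otimes$ is the Kronecker product; $\operatorname{tr}_3$ is the trace on $\mathrm{Mat}(n^3,\mathbb{C})$. (Such $P_{\mathcal T}$ is an orthogonal projection of rank $r$.) *)

theory Defs
  imports "Jordan_Normal_Form.Matrix"
begin

(* Matrices are JNF matrices; indices are 0-based (i.e. 1..n in the paper becomes 0..<n). *)

definition mtrace :: "complex mat \<Rightarrow> complex" where
  "mtrace A = (\<Sum>i<dim_row A. A $$ (i, i))"

definition mconj :: "complex mat \<Rightarrow> complex mat" where
  "mconj A = mat (dim_row A) (dim_col A) (\<lambda>ij. cnj (A $$ ij))"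

definition madj :: "complex mat \<Rightarrow> complex mat" where
  "madj A = transpose_mat (mconj A)"

definition kron :: "complex mat \<Rightarrow> complex mat \<Rightarrow> complex mat" where
  "kron A B = mat (dim_row A * dim_row B) (dim_col A * dim_col B)
     (\<lambda>(i, j). A $$ (i div dim_row B, j div dim_col B) * B $$ (i mod dim_row B, j mod dim_col B))"

definition munit :: "nat \<Rightarrow> nat \<Rightarrow> nat \<Rightarrow> complex mat" where
  "munit p a b = mat p p (\<lambda>(i, j). if i = a \<and> j = b then 1 else 0)"

definition msum :: "nat \<Rightarrow> nat \<Rightarrow> ('i \<Rightarrow> complex mat) \<Rightarrow> 'i set \<Rightarrow> complex mat" where
  "msum p q f S = mat p q (\<lambda>ij. \<Sum>s\<in>S. f s $$ ij)"

definition P_T :: "nat \<Rightarrow> nat \<Rightarrow> (nat \<Rightarrow> complex mat) \<Rightarrow> complex mat" where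
  "P_T n r V = msum (n * n) (n * n)
     (\<lambda>(s, a, b, c, d). ((V s $$ (a, b)) * (mconj (V s) $$ (c, d))) \<cdot>\<^sub>m
        kron (munit n a c) (munit n b d))
     ({..<r} \<times> {..<n} \<times> {..<n} \<times> {..<n} \<times> {..<n})"

definition A_T :: "nat \<Rightarrow> nat \<Rightarrow> (nat \<Rightarrow> complex mat) \<Rightarrow> complex mat" where
  "A_T n r V = msum (r * n) (r * n)
     (\<lambda>(s, m). kron (munit r s m)
        (msum n n (\<lambda>i. V i * mconj (V s) * transpose_mat (V m) * madj (V i)) {..<r}))
     ({..<r} \<times> {..<r})"

end

theory Submission
  imports Defs
begin

(* P_T = W W^H for the n^2 x r matrix W whose column s is the vectorisation of V_s. Hence
   (P_T)_1 = X X^H and (P_T)_2 = Y Y^H with X = kron W I_n and Y = kron I_n W (columns reordered),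
   and cyclicity of the trace gives tr((X X^H Y Y^H)^m) = tr((Y^H X X^H Y)^m) for m >= 1.
   Now Y^H X and X^H Y are r x r block matrices with blocks V_m conj(V_s) and V_m^t V_s^H, so
   their product is A_T. *)

lemma mult_add_less_mult:
  fixes x y a b :: nat
  assumes "x < a" and "y < b"
  shows "x * b + y < a * b"
proof -
  have "x * b + y < Suc x * b" using assms(2) by simp
  also have "\<dots> \<le> a * b" using assms(1) by (intro mult_le_mono1) simp
  finally show ?thesis .
qed

lemma div_mod_less_of_less_mult:
  fixes i a b :: nat
  assumes "i < a * b"
  shows "i div b < a" and "i mod b < b"
  using assms by (cases "b = 0"; simp add: less_mult_imp_div_less)+

lemma sum_lessThan_mult:
  fixes f :: "nat \<Rightarrow> 'a :: comm_monoid_add"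
  shows "(\<Sum>i<a * b. f i) = (\<Sum>x<a. \<Sum>y<b. f (x * b + y))"
proof (induction a)
  case (Suc a)
  have "{..<Suc a * b} = {..<a * b} \<union> {a * b..<a * b + b}" by auto
  then have "(\<Sum>i<Suc a * b. f i) = (\<Sum>i<a * b. f i) + (\<Sum>i\<in>{a * b..<a * b + b}. f i)"
    by (simp add: sum.union_disjoint ivl_disj_int)
  also have "(\<Sum>i\<in>{a * b..<a * b + b}. f i) = (\<Sum>y<b. f (a * b + y))"
    using sum.shift_bounds_nat_ivl[of f 0 "a * b" b] by (simp add: atLeast0LessThan add.commute)
  finally show ?case using Suc by simp
qed simp

lemma mtrace_mult_comm:
  assumes "A \<in> carrier_mat p q" and "B \<in> carrier_mat q p"
  shows "mtrace (A * B) = mtrace (B * A)"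
proof -
  have "mtrace (A * B) = (\<Sum>i<p. \<Sum>k<q. A $$ (i, k) * B $$ (k, i))"
    using assms by (simp add: mtrace_def scalar_prod_def atLeast0LessThan)
  also have "\<dots> = (\<Sum>k<q. \<Sum>i<p. B $$ (k, i) * A $$ (i, k))"
    by (subst sum.swap) (simp add: mult.commute)
  also have "\<dots> = mtrace (B * A)"
    using assms by (simp add: mtrace_def scalar_prod_def atLeast0LessThan)
  finally show ?thesis .
qed

lemma pow_mat_Suc_mult_comm:
  assumes A: "A \<in> carrier_mat p q" and B: "B \<in> carrier_mat q p"
  shows "(A * B) ^\<^sub>m Suc k = A * ((B * A) ^\<^sub>m k * B)"
proof (induction k)
  case 0
  show ?case using A B by simp
next
  case (Suc k)
  define M where "M = (B * A) ^\<^sub>m k * B"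
  have BA: "(B * A) ^\<^sub>m k \<in> carrier_mat q q" using A B by simp
  have M: "M \<in> carrier_mat q p" using BA B unfolding M_def by simp
  have "(A * B) ^\<^sub>m Suc (Suc k) = A * M * (A * B)"
    using Suc by (simp add: M_def)
  also have "\<dots> = A * (M * (A * B))"
    using assoc_mult_mat[OF A M mult_carrier_mat[OF A B]] .
  also have "M * (A * B) = M * A * B"
    using assoc_mult_mat[OF M A B] by simp
  also have "M * A = (B * A) ^\<^sub>m Suc k"
    unfolding M_def using assoc_mult_mat[OF BA B A] by simp
  finally show ?case by simp
qed

lemma mtrace_pow_mult_comm:
  assumes A: "A \<in> carrier_mat p q" and B: "B \<in> carrier_mat q p" and "k \<noteq> 0"
  shows "mtrace ((A * B) ^\<^sub>m k) = mtrace ((B * A) ^\<^sub>m k)"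
proof -
  obtain l where k: "k = Suc l" using \<open>k \<noteq> 0\<close> by (cases k) auto
  have BA: "(B * A) ^\<^sub>m l * B \<in> carrier_mat q p"
    using mult_carrier_mat[OF pow_carrier_mat[OF mult_carrier_mat[OF B A]] B] .
  have "mtrace ((A * B) ^\<^sub>m k) = mtrace (A * ((B * A) ^\<^sub>m l * B))"
    unfolding k pow_mat_Suc_mult_comm[OF A B] ..
  also have "\<dots> = mtrace ((B * A) ^\<^sub>m l * B * A)"
    using mtrace_mult_comm[OF A BA] .
  also have "\<dots> = mtrace ((B * A) ^\<^sub>m k)"
    using A B by (simp add: k assoc_mult_mat[of _ q q B p A])
  finally show ?thesis .
qed

lemma dim_madj [simp]: "dim_row (madj A) = dim_col A" "dim_col (madj A) = dim_row A"
  by (simp_all add: madj_def mconj_def)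

lemma index_madj [simp]:
  "i < dim_col A \<Longrightarrow> j < dim_row A \<Longrightarrow> madj A $$ (i, j) = cnj (A $$ (j, i))"
  by (simp add: madj_def mconj_def)

lemma madj_carrier_mat: "A \<in> carrier_mat p q \<Longrightarrow> madj A \<in> carrier_mat q p"
  unfolding carrier_mat_def by simp

lemma madj_one [simp]: "madj (1\<^sub>m n) = 1\<^sub>m n"
  by (rule eq_matI) auto

lemma mtrace_pow_mult_madj_rotate:
  assumes X: "X \<in> carrier_mat p a" and Y: "Y \<in> carrier_mat p b" and "k \<noteq> 0"
  shows "mtrace ((X * madj X * (Y * madj Y)) ^\<^sub>m k) = mtrace ((madj Y * X * (madj X * Y)) ^\<^sub>m k)"
proof -
  have X': "madj X \<in> carrier_mat a p" and Y': "madj Y \<in> carrier_mat b p"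
    using X Y by (simp_all add: madj_carrier_mat)
  have YY': "Y * madj Y \<in> carrier_mat p p" using Y Y' by simp
  have "mtrace ((X * madj X * (Y * madj Y)) ^\<^sub>m k) = mtrace ((X * (madj X * (Y * madj Y))) ^\<^sub>m k)"
    by (simp add: assoc_mult_mat[OF X X' YY'])
  also have "\<dots> = mtrace ((madj X * (Y * madj Y) * X) ^\<^sub>m k)"
    using X X' YY' \<open>k \<noteq> 0\<close> by (intro mtrace_pow_mult_comm) auto
  also have "madj X * (Y * madj Y) * X = madj X * Y * (madj Y * X)"
    using X X' Y Y' by (simp add: assoc_mult_mat[OF X' YY' X] assoc_mult_mat[OF Y Y' X]
        assoc_mult_mat[OF X' Y mult_carrier_mat[OF Y' X]])
  also have "mtrace ((madj X * Y * (madj Y * X)) ^\<^sub>m k) = mtrace ((madj Y * X * (madj X * Y)) ^\<^sub>m k)"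
    using X X' Y Y' \<open>k \<noteq> 0\<close> by (intro mtrace_pow_mult_comm) auto
  finally show ?thesis .
qed

lemma dim_kron [simp]:
  "dim_row (kron A B) = dim_row A * dim_row B" "dim_col (kron A B) = dim_col A * dim_col B"
  by (simp_all add: kron_def)

lemma index_kron:
  "i < dim_row A * dim_row B \<Longrightarrow> j < dim_col A * dim_col B \<Longrightarrow>
    kron A B $$ (i, j) = A $$ (i div dim_row B, j div dim_col B) * B $$ (i mod dim_row B, j mod dim_col B)"
  by (simp add: kron_def)

lemma kron_carrier_mat: "A \<in> carrier_mat a b \<Longrightarrow> B \<in> carrier_mat c d \<Longrightarrow> kron A B \<in> carrier_mat (a * c) (b * d)"
  by auto

lemma madj_kron: "madj (kron A B) = kron (madj A) (madj B)"
proof (rule eq_matI)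
  fix i j assume "i < dim_row (kron (madj A) (madj B))" "j < dim_col (kron (madj A) (madj B))"
  then have i: "i < dim_col A * dim_col B" and j: "j < dim_row A * dim_row B" by simp_all
  then have "i div dim_col B < dim_col A" "j div dim_row B < dim_row A"
    "i mod dim_col B < dim_col B" "j mod dim_row B < dim_row B"
    by (simp_all add: div_mod_less_of_less_mult)
  with i j show "madj (kron A B) $$ (i, j) = kron (madj A) (madj B) $$ (i, j)"
    by (simp add: index_kron)
qed simp_all

lemma kron_mult:
  assumes A: "A \<in> carrier_mat a b" and B: "B \<in> carrier_mat b c"
    and C: "C \<in> carrier_mat a' b'" and D: "D \<in> carrier_mat b' c'"
  shows "kron (A * B) (C * D) = kron A C * kron B D"
proof (rule eq_matI)
  fix i j assume "i < dim_row (kron A C * kron B D)" "j < dim_col (kron A C * kron B D)"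
  then have i: "i < a * a'" and j: "j < c * c'" using A B C D by simp_all
  then have ij: "i div a' < a" "j div c' < c" "i mod a' < a'" "j mod c' < c'"
    by (simp_all add: div_mod_less_of_less_mult)
  have "kron (A * B) (C * D) $$ (i, j) = (A * B) $$ (i div a', j div c') * (C * D) $$ (i mod a', j mod c')"
    using i j A B C D by (simp add: index_kron)
  also have "\<dots> = (\<Sum>x<b. A $$ (i div a', x) * B $$ (x, j div c')) * (\<Sum>y<b'. C $$ (i mod a', y) * D $$ (y, j mod c'))"
    using ij A B C D by (simp add: scalar_prod_def atLeast0LessThan)
  also have "\<dots> = (\<Sum>x<b. \<Sum>y<b'. kron A C $$ (i, x * b' + y) * kron B D $$ (x * b' + y, j))"
    using i j A B C D by (simp add: index_kron sum_product mult_add_less_mult mult_ac)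
  also have "\<dots> = (kron A C * kron B D) $$ (i, j)"
    using i j A B C D by (simp add: scalar_prod_def atLeast0LessThan sum_lessThan_mult)
  finally show "kron (A * B) (C * D) $$ (i, j) = (kron A C * kron B D) $$ (i, j)" .
qed (use A B C D in simp_all)

lemma mult_madj_swap_col_blocks:
  assumes Y: "Y \<in> carrier_mat p (r * n)" and Z: "Z \<in> carrier_mat p (n * r)"
    and YZ: "\<And>i s k. i < p \<Longrightarrow> s < r \<Longrightarrow> k < n \<Longrightarrow> Y $$ (i, s * n + k) = Z $$ (i, k * r + s)"
  shows "Y * madj Y = Z * madj Z"
proof (rule eq_matI)
  fix i j assume "i < dim_row (Z * madj Z)" "j < dim_col (Z * madj Z)"
  then have i: "i < p" and j: "j < p" using Z by simp_all
  have "(Y * madj Y) $$ (i, j) = (\<Sum>s<r. \<Sum>k<n. Y $$ (i, s * n + k) * cnj (Y $$ (j, s * n + k)))"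
    using i j Y by (simp add: scalar_prod_def atLeast0LessThan sum_lessThan_mult mult_add_less_mult)
  also have "\<dots> = (\<Sum>k<n. \<Sum>s<r. Z $$ (i, k * r + s) * cnj (Z $$ (j, k * r + s)))"
    using i j by (subst sum.swap) (simp add: YZ)
  also have "\<dots> = (Z * madj Z) $$ (i, j)"
    using i j Z by (simp add: scalar_prod_def atLeast0LessThan sum_lessThan_mult mult_add_less_mult)
  finally show "(Y * madj Y) $$ (i, j) = (Z * madj Z) $$ (i, j)" .
qed (use Y Z in simp_all)

lemma msum_carrier_mat [simp]: "msum p q f S \<in> carrier_mat p q"
  by (simp add: msum_def)

lemma index_msum [simp]: "i < p \<Longrightarrow> j < q \<Longrightarrow> msum p q f S $$ (i, j) = (\<Sum>s\<in>S. f s $$ (i, j))"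
  by (simp add: msum_def)

lemma msum_cong: "(\<And>s. s \<in> S \<Longrightarrow> f s = g s) \<Longrightarrow> msum p q f S = msum p q g S"
  by (simp add: msum_def cong: sum.cong)

definition block_mat :: "nat \<Rightarrow> nat \<Rightarrow> (nat \<Rightarrow> nat \<Rightarrow> complex mat) \<Rightarrow> complex mat" where
  "block_mat r n B = msum (r * n) (r * n) (\<lambda>(s, m). kron (munit r s m) (B s m)) ({..<r} \<times> {..<r})"

lemma dim_block_mat [simp]: "dim_row (block_mat r n B) = r * n" "dim_col (block_mat r n B) = r * n"
  by (simp_all add: block_mat_def msum_def)

lemma eq_block_matI:
  assumes A: "A \<in> carrier_mat (r * n) (r' * n')" and B: "B \<in> carrier_mat (r * n) (r' * n')"
    and AB: "\<And>s k m l. s < r \<Longrightarrow> k < n \<Longrightarrow> m < r' \<Longrightarrow> l < n' \<Longrightarrow>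
      A $$ (s * n + k, m * n' + l) = B $$ (s * n + k, m * n' + l)"
  shows "A = B"
proof (rule eq_matI)
  fix i j assume "i < dim_row B" "j < dim_col B"
  then have "i < r * n" "j < r' * n'" using B by simp_all
  then have "A $$ ((i div n) * n + i mod n, (j div n') * n' + j mod n') =
      B $$ ((i div n) * n + i mod n, (j div n') * n' + j mod n')"
    by (intro AB) (simp_all add: div_mod_less_of_less_mult)
  then show "A $$ (i, j) = B $$ (i, j)" by simp
qed (use A B in simp_all)

lemma index_block_mat:
  assumes B: "\<And>s m. s < r \<Longrightarrow> m < r \<Longrightarrow> B s m \<in> carrier_mat n n"
    and "s < r" "m < r" "k < n" "l < n"
  shows "block_mat r n B $$ (s * n + k, m * n + l) = B s m $$ (k, l)"
proof -
  have sk: "s * n + k < r * n" "m * n + l < r * n" using assms by (simp_all add: mult_add_less_mult)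
  have entry: "kron (munit r s' m') (B s' m') $$ (s * n + k, m * n + l) =
      (if (s', m') = (s, m) then B s m $$ (k, l) else 0)" if "s' < r" "m' < r" for s' m'
    using B[OF that] assms sk by (auto simp: index_kron munit_def)
  have "block_mat r n B $$ (s * n + k, m * n + l) =
      (\<Sum>x\<in>{..<r} \<times> {..<r}. if x = (s, m) then B s m $$ (k, l) else 0)"
    unfolding block_mat_def index_msum[OF sk] by (intro sum.cong refl) (clarsimp simp: entry)
  also have "\<dots> = B s m $$ (k, l)"
    using assms by (subst sum.delta) auto
  finally show ?thesis .
qed

lemma block_mat_mult:
  assumes F: "\<And>s m. s < r \<Longrightarrow> m < r \<Longrightarrow> F s m \<in> carrier_mat n n"
    and G: "\<And>s m. s < r \<Longrightarrow> m < r \<Longrightarrow> G s m \<in> carrier_mat n n"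
  shows "block_mat r n F * block_mat r n G = block_mat r n (\<lambda>s m. msum n n (\<lambda>i. F s i * G i m) {..<r})"
proof (rule eq_block_matI)
  fix s k m l assume skml: "s < r" "k < n" "m < r" "l < n"
  have "(block_mat r n F * block_mat r n G) $$ (s * n + k, m * n + l) =
      (\<Sum>i<r. \<Sum>c<n. F s i $$ (k, c) * G i m $$ (c, l))"
    using skml by (simp add: scalar_prod_def atLeast0LessThan sum_lessThan_mult mult_add_less_mult
        index_block_mat[OF F] index_block_mat[OF G])
  also have "\<dots> = (\<Sum>i<r. (F s i * G i m) $$ (k, l))"
    using skml by (intro sum.cong refl) (simp add: scalar_prod_def atLeast0LessThan carrier_matD[OF F] carrier_matD[OF G])
  also have "\<dots> = block_mat r n (\<lambda>s m. msum n n (\<lambda>i. F s i * G i m) {..<r}) $$ (s * n + k, m * n + l)"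
    using skml by (simp add: index_block_mat)
  finally show "(block_mat r n F * block_mat r n G) $$ (s * n + k, m * n + l) =
      block_mat r n (\<lambda>s m. msum n n (\<lambda>i. F s i * G i m) {..<r}) $$ (s * n + k, m * n + l)" .
qed (simp_all add: carrier_matI)

definition vec_mat :: "nat \<Rightarrow> nat \<Rightarrow> (nat \<Rightarrow> complex mat) \<Rightarrow> complex mat" where
  "vec_mat n r V = mat (n * n) r (\<lambda>(i, s). V s $$ (i div n, i mod n))"

lemma vec_mat_carrier_mat: "vec_mat n r V \<in> carrier_mat (n * n) r"
  by (simp add: vec_mat_def)

lemma P_T_eq_mult_madj:
  assumes V: "\<forall>s<r. V s \<in> carrier_mat n n"
  shows "P_T n r V = vec_mat n r V * madj (vec_mat n r V)"
proof (rule eq_matI)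
  fix x y assume "x < dim_row (vec_mat n r V * madj (vec_mat n r V))"
    "y < dim_col (vec_mat n r V * madj (vec_mat n r V))"
  then have x: "x < n * n" and y: "y < n * n" by (simp_all add: vec_mat_def)
  have xy: "x div n < n" "x mod n < n" "y div n < n" "y mod n < n"
    using x y by (simp_all add: div_mod_less_of_less_mult)
  let ?T = "{..<n} \<times> {..<n} \<times> {..<n} \<times> {..<n}"
  let ?f = "\<lambda>s. V s $$ (x div n, x mod n) * cnj (V s $$ (y div n, y mod n))"
  have entry: "((V s $$ (a, b) * mconj (V s) $$ (c, d)) \<cdot>\<^sub>m kron (munit n a c) (munit n b d)) $$ (x, y) =
      (if (a, b, c, d) = (x div n, x mod n, y div n, y mod n) then ?f s else 0)"
    if "s < r" "c < n" "d < n" for s a b c d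
    using V that x y xy by (auto simp: index_kron munit_def mconj_def)
  have "P_T n r V $$ (x, y) = (\<Sum>(s, t)\<in>{..<r} \<times> ?T.
      if t = (x div n, x mod n, y div n, y mod n) then ?f s else 0)"
    unfolding P_T_def index_msum[OF x y] by (intro sum.cong refl) (clarsimp simp: entry)
  also have "\<dots> = (\<Sum>s<r. ?f s)"
    unfolding sum.cartesian_product[symmetric] using xy by (subst sum.delta) auto
  also have "\<dots> = (vec_mat n r V * madj (vec_mat n r V)) $$ (x, y)"
    using x y by (simp add: vec_mat_def scalar_prod_def atLeast0LessThan)
  finally show "P_T n r V $$ (x, y) = (vec_mat n r V * madj (vec_mat n r V)) $$ (x, y)" .
qed (simp_all add: P_T_def msum_def vec_mat_def)

definition left_factor :: "nat \<Rightarrow> nat \<Rightarrow> (nat \<Rightarrow> complex mat) \<Rightarrow> complex mat" where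
  "left_factor n r V = kron (vec_mat n r V) (1\<^sub>m n)"

(* kron I_n W with its columns reordered from (k, s) to (s, k), so that its products with
   left_factor are block matrices indexed by s. *)
definition right_factor :: "nat \<Rightarrow> nat \<Rightarrow> (nat \<Rightarrow> complex mat) \<Rightarrow> complex mat" where
  "right_factor n r V = mat (n * n * n) (r * n) (\<lambda>(i, q). kron (1\<^sub>m n) (vec_mat n r V) $$ (i, q mod n * r + q div n))"

lemma dim_left_factor [simp]:
  "dim_row (left_factor n r V) = n * n * n" "dim_col (left_factor n r V) = r * n"
  by (simp_all add: left_factor_def vec_mat_def)

lemma dim_right_factor [simp]:
  "dim_row (right_factor n r V) = n * n * n" "dim_col (right_factor n r V) = r * n"
  by (simp_all add: right_factor_def)

lemma left_factor_carrier_mat: "left_factor n r V \<in> carrier_mat (n * n * n) (r * n)"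
  by (simp add: carrier_matI)

lemma right_factor_carrier_mat: "right_factor n r V \<in> carrier_mat (n * n * n) (r * n)"
  by (simp add: carrier_matI)

lemma index_left_factor:
  assumes "a < n" "b < n" "c < n" "s < r" "k < n"
  shows "left_factor n r V $$ ((a * n + b) * n + c, s * n + k) = (if c = k then V s $$ (a, b) else 0)"
  using assms by (simp add: left_factor_def vec_mat_def index_kron mult_add_less_mult)

lemma index_right_factor:
  assumes "a < n" "b < n" "c < n" "s < r" "k < n"
  shows "right_factor n r V $$ ((a * n + b) * n + c, s * n + k) = (if a = k then V s $$ (b, c) else 0)"
proof -
  have bc: "b * n + c < n * n" using assms by (simp add: mult_add_less_mult)
  have abc: "(a * n + b) * n + c = a * (n * n) + (b * n + c)" by (simp add: algebra_simps)
  have "a * (n * n) + (b * n + c) < n * (n * n)" using assms(1) bc by (rule mult_add_less_mult)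
  then show ?thesis
    using assms bc unfolding abc by (simp add: right_factor_def vec_mat_def index_kron mult_add_less_mult mult.assoc)
qed

lemma kron_P_T_one:
  assumes "\<forall>s<r. V s \<in> carrier_mat n n"
  shows "kron (P_T n r V) (1\<^sub>m n) = left_factor n r V * madj (left_factor n r V)"
proof -
  have W: "vec_mat n r V \<in> carrier_mat (n * n) r" by (rule vec_mat_carrier_mat)
  have "kron (P_T n r V) (1\<^sub>m n) = kron (vec_mat n r V * madj (vec_mat n r V)) (1\<^sub>m n * 1\<^sub>m n)"
    using assms by (simp add: P_T_eq_mult_madj)
  also have "\<dots> = kron (vec_mat n r V) (1\<^sub>m n) * kron (madj (vec_mat n r V)) (1\<^sub>m n)"
    using W by (intro kron_mult) (auto intro: madj_carrier_mat)
  finally show ?thesis by (simp add: left_factor_def madj_kron)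
qed

lemma kron_one_P_T:
  assumes "\<forall>s<r. V s \<in> carrier_mat n n"
  shows "kron (1\<^sub>m n) (P_T n r V) = right_factor n r V * madj (right_factor n r V)"
proof -
  have W: "vec_mat n r V \<in> carrier_mat (n * n) r" by (rule vec_mat_carrier_mat)
  let ?Z = "kron (1\<^sub>m n) (vec_mat n r V)"
  have Z: "?Z \<in> carrier_mat (n * n * n) (n * r)"
    using kron_carrier_mat[OF one_carrier_mat W] by (simp add: mult.assoc)
  have "kron (1\<^sub>m n) (P_T n r V) = kron (1\<^sub>m n * 1\<^sub>m n) (vec_mat n r V * madj (vec_mat n r V))"
    using assms by (simp add: P_T_eq_mult_madj)
  also have "\<dots> = ?Z * madj ?Z"
    using W by (subst kron_mult) (auto intro: madj_carrier_mat simp: madj_kron)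
  also have "\<dots> = right_factor n r V * madj (right_factor n r V)"
    by (rule mult_madj_swap_col_blocks[OF right_factor_carrier_mat Z, symmetric])
      (simp add: right_factor_def mult_add_less_mult)
  finally show ?thesis .
qed

lemma madj_left_factor_mult_right_factor:
  assumes V: "\<forall>s<r. V s \<in> carrier_mat n n"
  shows "madj (left_factor n r V) * right_factor n r V = block_mat r n (\<lambda>s m. transpose_mat (V m) * madj (V s))"
proof (rule eq_block_matI)
  have blocks: "transpose_mat (V m') * madj (V s') \<in> carrier_mat n n" if "s' < r" "m' < r" for s' m'
    using V that unfolding carrier_mat_def by auto
  fix s k m l assume skml: "s < r" "k < n" "m < r" "l < n"
  have Vsm: "V s \<in> carrier_mat n n" "V m \<in> carrier_mat n n" using V skml by auto
  have "(madj (left_factor n r V) * right_factor n r V) $$ (s * n + k, m * n + l) =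
      (\<Sum>a<n. \<Sum>b<n. \<Sum>c<n. cnj (if c = k then V s $$ (a, b) else 0) * (if a = l then V m $$ (b, c) else 0))"
    using skml by (simp add: scalar_prod_def atLeast0LessThan sum_lessThan_mult mult_add_less_mult
        index_left_factor index_right_factor)
  also have "\<dots> = (\<Sum>a<n. \<Sum>b<n. \<Sum>c<n. if c = k then (if a = l then cnj (V s $$ (a, b)) * V m $$ (b, c) else 0) else 0)"
    by (intro sum.cong refl) simp
  also have "\<dots> = (\<Sum>b<n. V m $$ (b, k) * cnj (V s $$ (l, b)))"
    using skml by (subst sum.swap) (simp add: sum.delta mult.commute)
  also have "\<dots> = block_mat r n (\<lambda>s m. transpose_mat (V m) * madj (V s)) $$ (s * n + k, m * n + l)"
    using skml blocks Vsm by (simp add: index_block_mat scalar_prod_def atLeast0LessThan)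
  finally show "(madj (left_factor n r V) * right_factor n r V) $$ (s * n + k, m * n + l) =
      block_mat r n (\<lambda>s m. transpose_mat (V m) * madj (V s)) $$ (s * n + k, m * n + l)" .
qed (simp_all add: carrier_matI)

lemma madj_right_factor_mult_left_factor:
  assumes V: "\<forall>s<r. V s \<in> carrier_mat n n"
  shows "madj (right_factor n r V) * left_factor n r V = block_mat r n (\<lambda>s m. V m * mconj (V s))"
proof (rule eq_block_matI)
  have blocks: "V m' * mconj (V s') \<in> carrier_mat n n" if "s' < r" "m' < r" for s' m'
    using V that unfolding carrier_mat_def by (auto simp: mconj_def)
  fix s k m l assume skml: "s < r" "k < n" "m < r" "l < n"
  have Vsm: "V s \<in> carrier_mat n n" "V m \<in> carrier_mat n n" using V skml by auto
  have "(madj (right_factor n r V) * left_factor n r V) $$ (s * n + k, m * n + l) =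
      (\<Sum>a<n. \<Sum>b<n. \<Sum>c<n. cnj (if a = k then V s $$ (b, c) else 0) * (if c = l then V m $$ (a, b) else 0))"
    using skml by (simp add: scalar_prod_def atLeast0LessThan sum_lessThan_mult mult_add_less_mult
        index_left_factor index_right_factor)
  also have "\<dots> = (\<Sum>a<n. \<Sum>b<n. \<Sum>c<n. if c = l then (if a = k then cnj (V s $$ (b, c)) * V m $$ (a, b) else 0) else 0)"
    by (intro sum.cong refl) simp
  also have "\<dots> = (\<Sum>b<n. V m $$ (k, b) * cnj (V s $$ (b, l)))"
    using skml by (subst sum.swap) (simp add: sum.delta mult.commute)
  also have "\<dots> = block_mat r n (\<lambda>s m. V m * mconj (V s)) $$ (s * n + k, m * n + l)"
    using skml blocks Vsm by (simp add: index_block_mat scalar_prod_def atLeast0LessThan mconj_def)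
  finally show "(madj (right_factor n r V) * left_factor n r V) $$ (s * n + k, m * n + l) =
      block_mat r n (\<lambda>s m. V m * mconj (V s)) $$ (s * n + k, m * n + l)" .
qed (simp_all add: carrier_matI)

lemma A_T_eq_block_mat_mult:
  assumes V: "\<forall>s<r. V s \<in> carrier_mat n n"
  shows "A_T n r V = block_mat r n (\<lambda>s m. V m * mconj (V s)) * block_mat r n (\<lambda>s m. transpose_mat (V m) * madj (V s))"
proof -
  have assoc: "V i * mconj (V s) * transpose_mat (V m) * madj (V i) = V i * mconj (V s) * (transpose_mat (V m) * madj (V i))"
    if "i \<in> {..<r}" "s < r" "m < r" for i s m
    using V that by (intro assoc_mult_mat[of _ n n _ n]) (auto simp: mconj_def intro!: madj_carrier_mat carrier_matI)
  have "A_T n r V = block_mat r n (\<lambda>s m. msum n n (\<lambda>i. V i * mconj (V s) * (transpose_mat (V m) * madj (V i))) {..<r})"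
    unfolding A_T_def block_mat_def by (intro msum_cong) (auto intro!: arg_cong[where f = "kron _"] msum_cong simp: assoc)
  also have "\<dots> = block_mat r n (\<lambda>s m. V m * mconj (V s)) * block_mat r n (\<lambda>s m. transpose_mat (V m) * madj (V s))"
    using V by (subst block_mat_mult) (auto simp: mconj_def intro!: madj_carrier_mat carrier_matI)
  finally show ?thesis .
qed

theorem lemma5:
  fixes n r :: nat and V :: "nat \<Rightarrow> complex mat" and m :: nat
  assumes "n \<ge> 2" and "r \<ge> 1"
    and "\<forall>s<r. V s \<in> carrier_mat n n"
    and "\<forall>s<r. \<forall>t<r. mtrace (madj (V s) * V t) = (if s = t then 1 else 0)"
    and "m \<ge> 1"
  shows "mtrace ((kron (P_T n r V) (1\<^sub>m n) * kron (1\<^sub>m n) (P_T n r V)) ^\<^sub>m m)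
         = mtrace (A_T n r V ^\<^sub>m m)"
  using assms(3,5)
  by (simp add: kron_P_T_one kron_one_P_T
      mtrace_pow_mult_madj_rotate[OF left_factor_carrier_mat right_factor_carrier_mat]
      madj_left_factor_mult_right_factor madj_right_factor_mult_left_factor A_T_eq_block_mat_mult)

end
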